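(* There exists an $S(3,K_4^{(3)}+e,v)$ for each $v\in\{7,11,16,26,31,32\}$.
   Context: $K_4^{(3)}+e$ denotes the 3-uniform hypergraph with vertex set $\{1,2,3,4,5\}$ and edge set $\{\{1,2,3\},\{1,2,4\},\{1,3,4\},\{2,3,4\},\{3,4,5\}\}$. An $S(3,K_4^{(3)}+e,v)$ is a collection of 3-uniform hypergraphs (blocks) on subsets of a $v$-set $X$, each isomorphic to $K_4^{(3)}+e$, whose edge sets partition the set of all 3-subsets of $X$. *)

theory Defs
  imports Main
begin

definition K4e_edges :: "nat set set" where
  "K4e_edges = {{1,2,3},{1,2,4},{1,3,4},{2,3,4},{3,4,5}}"

text \<open>A block on the ground set X: a 3-uniform hypergraph (given by its edge set)
  on a subset of X that is isomorphic to K_4^(3)+e, i.e. the image of the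
  template under an injective vertex map from {1..5} into X.  (The template has
  no isolated vertices, so the hypergraph is determined by its edge set.)\<close>
definition is_K4e_block :: "'a set \<Rightarrow> 'a set set \<Rightarrow> bool" where
  "is_K4e_block X E \<longleftrightarrow>
     (\<exists>f. inj_on f {1..5::nat} \<and> f ` {1..5} \<subseteq> X \<and> E = (\<lambda>e. f ` e) ` K4e_edges)"

definition is_S3_K4e :: "'a set \<Rightarrow> 'a set set set \<Rightarrow> bool" where
  "is_S3_K4e X \<B> \<longleftrightarrow>
     (\<forall>E\<in>\<B>. is_K4e_block X E) \<and>
     (\<forall>E1\<in>\<B>. \<forall>E2\<in>\<B>. E1 \<noteq> E2 \<longrightarrow> E1 \<inter> E2 = {}) \<and>
     \<Union>\<B> = {T. T \<subseteq> X \<and> card T = 3}"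

end

theory Submission
  imports Defs "HOL-Library.Code_Target_Nat"
begin

text \<open>All six designs are cyclic: the points are the residues modulo \<open>v\<close> and the blocks are
  the translates of a few base blocks. A triple \<open>{a, b, c}\<close> is the translate by \<open>a\<close> of
  \<open>{0, b - a, c - a}\<close>, so the translates cover every triple as soon as every ordered pair
  \<open>(p, q)\<close> of distinct nonzero residues occurs as \<open>(y - x, z - x)\<close> for an edge \<open>{x, y, z}\<close>
  of some base block, read in some order. There are \<open>v\<close> translates of each base block, each
  with 5 edges, so if \<open>5 v\<close> times the number of base blocks equals \<open>C(v, 3)\<close> the covering
  is a partition.\<close>

lemma disjoint_if_sum_card_le_card_Union:
  assumes "finite F" "\<And>E. E \<in> F \<Longrightarrow> finite E" "sum card F \<le> card (\<Union>F)"
    and "E1 \<in> F" "E2 \<in> F" "E1 \<noteq> E2"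
  shows "E1 \<inter> E2 = {}"
proof (rule ccontr)
  assume "E1 \<inter> E2 \<noteq> {}"
  then obtain t where t: "t \<in> E1" "t \<in> E2" by auto
  let ?S = "SIGMA E:F. E"
  have fin: "finite ?S" using assms(1,2) by auto
  have "snd ` ?S = \<Union>F" by force
  moreover have "card ?S = sum card F" using assms(1,2) by simp
  ultimately have "card (snd ` ?S) = card ?S"
    using assms(3) card_image_le[OF fin, of snd] by simp
  then have "inj_on snd ?S" using fin by (rule eq_card_imp_inj_on[rotated])
  moreover have "(E1, t) \<in> ?S" "(E2, t) \<in> ?S" using t assms(4,5) by auto
  ultimately have "(E1, t) = (E2, t)" using inj_onD[of snd ?S "(E1, t)" "(E2, t)"] by simp
  with assms(6) show False by simp
qed

definition mod_diff :: "nat \<Rightarrow> nat \<Rightarrow> nat \<Rightarrow> nat" where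
  "mod_diff n x y = (y + n - x) mod n"

lemma add_mod_diff:
  assumes "x < n" "y < n"
  shows "(x + mod_diff n x y) mod n = y"
proof -
  have "(x + mod_diff n x y) mod n = (x + (y + n - x)) mod n"
    unfolding mod_diff_def by (simp add: mod_add_right_eq)
  also have "x + (y + n - x) = y + n" using assms by simp
  finally show ?thesis using assms by simp
qed

lemma mod_diff_eq_iff:
  assumes "x < n" "y < n" "z < n"
  shows "mod_diff n x y = mod_diff n x z \<longleftrightarrow> y = z"
  using add_mod_diff[OF assms(1,2)] add_mod_diff[OF assms(1,3)] by metis

lemma mod_diff_self: "mod_diff n x x = 0"
  by (simp add: mod_diff_def)

lemma mod_diff_shift:
  assumes "x < n"
  shows "(z + mod_diff n x a) mod n = (mod_diff n x z + a) mod n"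
proof -
  have "(z + mod_diff n x a) mod n = (z + (a + n - x)) mod n"
    unfolding mod_diff_def by (simp add: mod_add_right_eq)
  also have "z + (a + n - x) = (z + n - x) + a" using assms by simp
  finally show ?thesis unfolding mod_diff_def by (simp add: mod_add_left_eq)
qed

lemma mod_add_right_cancel_less:
  fixes x y k n :: nat
  assumes "x < n" "y < n" "(x + k) mod n = (y + k) mod n"
  shows "x = y"
proof -
  define m where "m = mod_diff n (k mod n) 0"
  have "(k mod n + m) mod n = 0"
    unfolding m_def using assms(1) by (intro add_mod_diff) auto
  then have "((z + k) mod n + m) mod n = z" if "z < n" for z
    using that by (metis add.assoc add_0_right mod_add_left_eq mod_add_right_eq mod_less)
  then show ?thesis using assms by metis
qed

definition triple_set :: "'a \<times> 'a \<times> 'a \<Rightarrow> 'a set" where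
  "triple_set = (\<lambda>(a, b, c). {a, b, c})"

fun orderings :: "'a \<times> 'a \<times> 'a \<Rightarrow> ('a \<times> 'a \<times> 'a) list" where
  "orderings (a, b, c) = [(a,b,c), (a,c,b), (b,a,c), (b,c,a), (c,a,b), (c,b,a)]"

lemma mem_orderings: "(i, j, l) \<in> set (orderings t) \<Longrightarrow> {i, j, l} = triple_set t"
  by (cases t) (auto simp: triple_set_def)

definition K4e_triples :: "(nat \<times> nat \<times> nat) list" where
  "K4e_triples = [(1,2,3), (1,2,4), (1,3,4), (2,3,4), (3,4,5)]"

lemma K4e_edges_eq: "K4e_edges = triple_set ` set K4e_triples"
  by (simp add: K4e_edges_def K4e_triples_def triple_set_def)

lemma K4e_edge_subset: "e \<in> K4e_edges \<Longrightarrow> e \<subseteq> {1..5}"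
  by (auto simp: K4e_edges_def)

lemma card_K4e_edge: "e \<in> K4e_edges \<Longrightarrow> card e = 3"
  by (auto simp: K4e_edges_def)

lemma card_K4e_edges_le: "card K4e_edges \<le> 5"
  unfolding K4e_edges_eq
  by (rule order.trans[OF card_image_le order.trans[OF card_length]]) (simp_all add: K4e_triples_def)

text \<open>The certificates below refer to ordered edges by their position in this list.\<close>

definition K4e_ordered_edges :: "(nat \<times> nat \<times> nat) list" where
  "K4e_ordered_edges = concat (map orderings K4e_triples)"

lemma K4e_ordered_edge: "(i, j, l) \<in> set K4e_ordered_edges \<Longrightarrow> {i, j, l} \<in> K4e_edges"
  unfolding K4e_ordered_edges_def K4e_edges_eq by (auto dest: mem_orderings)

lemma is_K4e_block_edge:
  assumes "is_K4e_block X E" "T \<in> E"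
  shows "T \<subseteq> X" "card T = 3"
proof -
  from assms obtain f e where f: "inj_on f {1..5}" "f ` {1..5} \<subseteq> X"
    and e: "e \<in> K4e_edges" "T = f ` e"
    unfolding is_K4e_block_def by auto
  show "T \<subseteq> X" using f(2) e K4e_edge_subset by blast
  have "inj_on f e" using f(1) K4e_edge_subset[OF e(1)] by (rule inj_on_subset)
  then show "card T = 3" using e card_K4e_edge by (simp add: card_image)
qed

lemma is_K4e_block_card_le:
  assumes "is_K4e_block X E"
  shows "finite E" "card E \<le> 5"
proof -
  from assms obtain f where E: "E = (\<lambda>e. f ` e) ` K4e_edges"
    unfolding is_K4e_block_def by auto
  show "finite E" unfolding E K4e_edges_eq by simp
  show "card E \<le> 5" unfolding E
    by (rule order.trans[OF card_image_le card_K4e_edges_le]) (simp add: K4e_edges_eq)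
qed

definition is_base_block :: "nat \<Rightarrow> nat list \<Rightarrow> bool" where
  "is_base_block n B \<longleftrightarrow> length B = 5 \<and> distinct B \<and> list_all (\<lambda>x. x < n) B"

text \<open>A base block lists the images of the template vertices 1, \<dots>, 5 in \<open>\<int>/n\<close>.\<close>

definition translate_vertex :: "nat \<Rightarrow> nat list \<Rightarrow> nat \<Rightarrow> nat \<Rightarrow> nat" where
  "translate_vertex n B k i = (B ! (i - 1) + k) mod n"

definition translated_block :: "nat \<Rightarrow> nat list \<Rightarrow> nat \<Rightarrow> nat set set" where
  "translated_block n B k = (\<lambda>e. translate_vertex n B k ` e) ` K4e_edges"

lemma is_base_block_nth_less:
  assumes "is_base_block n B" "i \<in> {1..5}"
  shows "B ! (i - 1) < n"
  using assms by (auto simp: is_base_block_def list_all_iff)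

lemma inj_on_translate_vertex:
  assumes "is_base_block n B"
  shows "inj_on (translate_vertex n B k) {1..5}"
proof (rule inj_onI)
  fix i j assume ij: "i \<in> {1..5}" "j \<in> {1..5}"
    and eq: "translate_vertex n B k i = translate_vertex n B k j"
  have "B ! (i - 1) = B ! (j - 1)"
    using mod_add_right_cancel_less is_base_block_nth_less[OF assms] ij eq
    unfolding translate_vertex_def by blast
  then have "i - 1 = j - 1"
    using assms ij by (auto simp: is_base_block_def nth_eq_iff_index_eq)
  then show "i = j" using ij by auto
qed

lemma translated_block_is_K4e_block:
  assumes "is_base_block n B"
  shows "is_K4e_block {0..<n} (translated_block n B k)"
proof -
  have "0 < n" using is_base_block_nth_less[OF assms, of 1] by simp
  then have "translate_vertex n B k ` {1..5} \<subseteq> {0..<n}"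
    by (auto simp: translate_vertex_def)
  then show ?thesis
    unfolding is_K4e_block_def translated_block_def
    using inj_on_translate_vertex[OF assms] by blast
qed

fun difference_pair :: "nat \<Rightarrow> nat list \<Rightarrow> nat \<times> nat \<times> nat \<Rightarrow> nat \<times> nat" where
  "difference_pair n B (i, j, l) =
     (mod_diff n (B ! (i - 1)) (B ! (j - 1)), mod_diff n (B ! (i - 1)) (B ! (l - 1)))"

definition covers_differences :: "nat \<Rightarrow> nat list list \<Rightarrow> bool" where
  "covers_differences n Bs \<longleftrightarrow> (\<forall>p q. 0 < p \<and> p < n \<and> 0 < q \<and> q < n \<and> p \<noteq> q \<longrightarrow>
     (\<exists>B\<in>set Bs. \<exists>t\<in>set K4e_ordered_edges. difference_pair n B t = (p, q)))"

lemma triple_in_translated_block: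
  assumes base: "\<forall>B\<in>set Bs. is_base_block n B" and cov: "covers_differences n Bs"
    and T: "T \<subseteq> {0..<n}" "card T = 3"
  shows "\<exists>B\<in>set Bs. \<exists>k<n. T \<in> translated_block n B k"
proof -
  obtain a b c where abc: "T = {a, b, c}" "a \<noteq> b" "b \<noteq> c" "a \<noteq> c"
    using T(2) by (auto simp: card_3_iff)
  have less: "a < n" "b < n" "c < n" using T(1) abc(1) by auto
  define p where "p = mod_diff n a b"
  define q where "q = mod_diff n a c"
  have "0 < p" "0 < q" "p \<noteq> q"
    using mod_diff_eq_iff[OF less(1)] mod_diff_self[of n a] less abc(2-4)
    unfolding p_def q_def by (metis gr0I)+
  moreover have "p < n" "q < n" using less unfolding p_def q_def mod_diff_def by auto
  ultimately obtain B i j l where B: "B \<in> set Bs" and ijl: "(i, j, l) \<in> set K4e_ordered_edges"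
    and pq: "difference_pair n B (i, j, l) = (p, q)"
    using cov unfolding covers_differences_def by (metis prod_cases3)
  have "{i, j, l} \<subseteq> {1..5}" using K4e_edge_subset K4e_ordered_edge[OF ijl] by blast
  then have Bn: "B ! (i - 1) < n" "B ! (j - 1) < n" "B ! (l - 1) < n"
    using is_base_block_nth_less base B by auto
  define k where "k = mod_diff n (B ! (i - 1)) a"
  \<comment> \<open>the translate by \<open>k\<close> moves vertex \<open>i\<close> to \<open>a\<close>, and then the differences \<open>p, q\<close> put \<open>j, l\<close> on \<open>b, c\<close>\<close>
  have "translate_vertex n B k i = a"
    unfolding translate_vertex_def k_def using add_mod_diff[OF Bn(1) less(1)] .
  moreover have "translate_vertex n B k j = b" "translate_vertex n B k l = c"
    unfolding translate_vertex_def k_def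
    using mod_diff_shift[OF Bn(1)] pq add_mod_diff[OF less(1)] less
    by (simp_all add: p_def q_def add.commute)
  ultimately have "T = translate_vertex n B k ` {i, j, l}" using abc(1) by auto
  then have "T \<in> translated_block n B k"
    unfolding translated_block_def using K4e_ordered_edge[OF ijl] by blast
  moreover have "k < n" using less unfolding k_def mod_diff_def by simp
  ultimately show ?thesis using B by blast
qed

theorem cyclic_development_is_S3_K4e:
  assumes base: "\<forall>B\<in>set Bs. is_base_block n B" and cov: "covers_differences n Bs"
    and count: "5 * n * length Bs = n choose 3"
  shows "is_S3_K4e {0..<n} {translated_block n B k | B k. B \<in> set Bs \<and> k < n}"
proof -
  let ?F = "{translated_block n B k | B k. B \<in> set Bs \<and> k < n}"
  let ?T = "{T. T \<subseteq> {0..<n} \<and> card T = 3}"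
  have blocks: "\<forall>E\<in>?F. is_K4e_block {0..<n} E"
    using base translated_block_is_K4e_block by blast
  have cover: "\<Union>?F = ?T"
  proof
    show "\<Union>?F \<subseteq> ?T"
    proof
      fix T assume "T \<in> \<Union>?F"
      then obtain E where "E \<in> ?F" "T \<in> E" by blast
      then show "T \<in> ?T" using blocks is_K4e_block_edge by blast
    qed
    show "?T \<subseteq> \<Union>?F"
    proof
      fix T assume "T \<in> ?T"
      then obtain B k where "B \<in> set Bs" "k < n" "T \<in> translated_block n B k"
        using triple_in_translated_block[OF base cov] by blast
      then show "T \<in> \<Union>?F" by blast
    qed
  qed
  have F_eq: "?F = (\<lambda>(B, k). translated_block n B k) ` (set Bs \<times> {..<n})" by force
  then have fin: "finite ?F" by simp
  have "card ?F \<le> card (set Bs \<times> {..<n})" unfolding F_eq by (rule card_image_le) simp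
  also have "\<dots> \<le> length Bs * n" by (simp add: card_cartesian_product card_length)
  finally have card_F: "card ?F \<le> length Bs * n" .
  have "card E \<le> 5" if "E \<in> ?F" for E using blocks that is_K4e_block_card_le(2) by blast
  then have "sum card ?F \<le> card ?F * 5" using sum_bounded_above[of ?F card 5] by simp
  also have "\<dots> \<le> 5 * n * length Bs" using mult_le_mono1[OF card_F, of 5] by (simp only: ac_simps)
  also have "\<dots> = card (\<Union>?F)" using count cover n_subsets[of "{0..<n}" 3] by simp
  finally have "sum card ?F \<le> card (\<Union>?F)" .
  then have "\<forall>E1\<in>?F. \<forall>E2\<in>?F. E1 \<noteq> E2 \<longrightarrow> E1 \<inter> E2 = {}"
    using disjoint_if_sum_card_le_card_Union[OF fin] blocks is_K4e_block_card_le(1) by blast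
  then show ?thesis unfolding is_S3_K4e_def using blocks cover by blast
qed

text \<open>The certificate for \<open>\<int>/n\<close> gives, for each \<open>p = 1, \<dots>, n - 1\<close>, the list \<open>W ! (p - 1)\<close> of
  pairs (index of a base block, index of an ordered edge) whose difference pairs are
  \<open>(p, q)\<close> for \<open>q = 1, \<dots>, n - 1\<close>, \<open>q \<noteq> p\<close>, in this order.\<close>

definition covers_row :: "nat \<Rightarrow> nat list list \<Rightarrow> nat \<Rightarrow> (nat \<times> nat) list \<Rightarrow> bool" where
  "covers_row n Bs p ws \<longleftrightarrow>
     list_all (\<lambda>(b, t). b < length Bs \<and> t < length K4e_ordered_edges) ws \<and>
     map (\<lambda>(b, t). difference_pair n (Bs ! b) (K4e_ordered_edges ! t)) ws =
     map (\<lambda>q. (p, q)) (filter (\<lambda>q. q \<noteq> p) [1..<n])"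

definition cyclic_certificate :: "nat \<Rightarrow> nat list list \<Rightarrow> (nat \<times> nat) list list \<Rightarrow> bool" where
  "cyclic_certificate n Bs W \<longleftrightarrow>
     list_all (is_base_block n) Bs \<and> 5 * n * length Bs = n choose 3 \<and> length W = n - 1 \<and>
     list_all (\<lambda>(p, ws). covers_row n Bs p ws) (zip [1..<n] W)"

lemma covers_row_pair:
  assumes row: "covers_row n Bs p ws" and q: "0 < q" "q < n" "q \<noteq> p"
  shows "\<exists>B\<in>set Bs. \<exists>t\<in>set K4e_ordered_edges. difference_pair n B t = (p, q)"
proof -
  have "(p, q) \<in> set (map (\<lambda>q. (p, q)) (filter (\<lambda>q. q \<noteq> p) [1..<n]))" using q by auto
  then have "(p, q) \<in> set (map (\<lambda>(b, t). difference_pair n (Bs ! b) (K4e_ordered_edges ! t)) ws)"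
    using row unfolding covers_row_def by metis
  then obtain b t where bt: "(b, t) \<in> set ws"
    and pq: "difference_pair n (Bs ! b) (K4e_ordered_edges ! t) = (p, q)" by auto
  have "b < length Bs" "t < length K4e_ordered_edges"
    using row bt unfolding covers_row_def list_all_iff by fastforce+
  then show ?thesis using pq by (meson nth_mem)
qed

lemma cyclic_certificate_covers_differences:
  assumes cert: "cyclic_certificate n Bs W"
  shows "covers_differences n Bs"
  unfolding covers_differences_def
proof (intro allI impI, elim conjE)
  fix p q :: nat assume pq: "0 < p" "p < n" "0 < q" "q < n" "p \<noteq> q"
  have len: "length W = n - 1" using cert by (simp add: cyclic_certificate_def)
  then have "zip [1..<n] W ! (p - 1) = (p, W ! (p - 1))" using pq by simp
  moreover have "p - 1 < length (zip [1..<n] W)" using pq len by simp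
  ultimately have "(p, W ! (p - 1)) \<in> set (zip [1..<n] W)" by (metis nth_mem)
  then have "covers_row n Bs p (W ! (p - 1))"
    using cert unfolding cyclic_certificate_def list_all_iff by fastforce
  then show "\<exists>B\<in>set Bs. \<exists>t\<in>set K4e_ordered_edges. difference_pair n B t = (p, q)"
    using covers_row_pair pq by simp
qed

lemma S3_K4e_exists_if_cyclic_certificate:
  assumes cert: "cyclic_certificate n Bs W"
  shows "\<exists>(X :: nat set) \<B>. finite X \<and> card X = n \<and> is_S3_K4e X \<B>"
proof -
  have "\<forall>B\<in>set Bs. is_base_block n B" "5 * n * length Bs = n choose 3"
    using cert by (auto simp: cyclic_certificate_def list_all_iff)
  then have "is_S3_K4e {0..<n} {translated_block n B k | B k. B \<in> set Bs \<and> k < n}"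
    using cyclic_development_is_S3_K4e cyclic_certificate_covers_differences[OF cert] by blast
  then show ?thesis by (intro exI[of _ "{0..<n}"]) auto
qed

lemma cyclic_certificate_7:
  "cyclic_certificate 7 [[0, 1, 2, 4, 5]] [[(0,0),(0,18),(0,6),(0,27),(0,3)],[(0,1),(0,24),(0,12),(0,15),(0,21)],[(0,19),(0,25),(0,10),(0,16),(0,9)],[(0,7),(0,13),(0,11),(0,22),(0,28)],[(0,26),(0,14),(0,17),(0,23),(0,4)],[(0,2),(0,20),(0,8),(0,29),(0,5)]]"
  by code_simp

lemma cyclic_certificate_11:
  "cyclic_certificate 11 [[0, 1, 8, 10, 5], [0, 2, 6, 7, 10], [0, 1, 3, 6, 10]] [[(0,10),(2,0),(1,24),(1,15),(2,6),(1,21),(0,0),(0,16),(0,6)],[(0,11),(0,15),(0,21),(2,18),(1,0),(1,6),(0,24),(0,22),(2,3)],[(2,1),(0,14),(0,4),(0,28),(2,12),(2,24),(2,15),(2,21),(1,27)],[(1,25),(0,20),(0,5),(1,18),(1,10),(2,28),(2,27),(1,3),(1,16)],[(1,14),(2,19),(0,29),(1,19),(2,10),(1,4),(2,16),(1,9),(2,9)],[(2,7),(1,1),(2,13),(1,11),(2,11),(1,12),(2,22),(0,27),(1,22)],[(1,20),(1,7),(2,25),(2,29),(1,5),(1,13),(1,28),(0,18),(0,3)],[(0,1),(0,25),(2,14),(2,26),(2,17),(2,23),(1,29),(2,4),(0,12)],[(0,17),(0,23),(2,20),(1,2),(1,8),(0,26),(0,19),(2,5),(0,9)],[(0,7),(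2,2),(1,26),(1,17),(2,8),(1,23),(0,2),(0,13),(0,8)]]"
  by code_simp

lemma cyclic_certificate_16:
  "cyclic_certificate 16 [[0, 6, 11, 13, 12], [0, 2, 13, 14, 10], [0, 1, 8, 10, 15], [0, 8, 5, 15, 3], [0, 3, 8, 12, 13], [0, 1, 4, 14, 6], [0, 1, 7, 11, 4]] [[(0,25),(1,15),(5,0),(1,21),(3,16),(6,0),(2,0),(3,10),(2,6),(6,6),(4,27),(1,24),(5,6),(0,29)],[(0,24),(5,10),(1,10),(0,15),(5,16),(2,24),(2,15),(2,21),(5,25),(0,21),(3,28),(1,0),(1,6),(1,16)],[(1,14),(5,11),(1,28),(1,4),(5,22),(6,28),(4,0),(0,10),(3,20),(3,5),(4,6),(5,18),(0,16),(5,3)],[(5,1),(1,11),(1,29),(4,24),(3,27),(4,10),(4,15),(6,15),(6,21),(4,21),(4,16),(6,24),(5,12),(1,22)],[(1,20),(0,14),(1,5),(4,25),(6,10),(0,18),(3,1),(4,18),(0,3),(0,4),(6,16),(4,3),(2,27),(3,12)],[(3,17),(5,17),(5,23),(3,26),(6,11),(2,10),(5,26),(3,23),(6,18),(0,0),(6,22),(0,6),(2,16),(6,3)],[(6,1),(2,25),(6,29),(4,11),(0,19),(2,11),(3,9),(2,18),(0,9),(6,12),(4,22),(3,19),(2,22),(2,3)],[(2,1),(2,14),(4,1),(4,14),(3,0),(5,27),(3,8),(2,4),(2,12),(4,4),(4,12),(3,2),(5,29),(3,6)],[(3,11),(2,20),(0,11),(6,14),(4,19),(3,22),(2,19),(2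,5),(6,4),(2,28),(6,27),(4,9),(0,22),(2,9)],[(2,7),(5,24),(3,21),(6,20),(0,2),(6,19),(0,8),(2,13),(6,5),(3,15),(5,15),(5,21),(3,24),(6,9)],[(6,7),(0,20),(3,4),(4,20),(0,5),(0,1),(6,13),(4,5),(2,29),(3,14),(1,18),(0,12),(1,3),(4,28)],[(4,26),(3,29),(4,7),(4,17),(6,17),(6,23),(4,23),(4,13),(6,26),(5,14),(1,19),(5,4),(1,9),(1,27)],[(1,25),(1,1),(5,19),(6,25),(4,2),(0,7),(3,18),(3,3),(4,8),(5,20),(0,13),(5,5),(1,12),(5,9)],[(5,7),(1,7),(0,17),(5,13),(2,26),(2,17),(2,23),(5,28),(0,23),(3,25),(1,2),(1,8),(1,13),(0,26)],[(0,28),(1,17),(5,2),(1,23),(3,13),(6,2),(2,2),(3,7),(2,8),(6,8),(4,29),(1,26),(5,8),(0,27)]]"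
  by code_simp

lemma cyclic_certificate_26:
  "cyclic_certificate 26 [[0, 1, 5, 9, 23], [0, 4, 2, 20, 9], [0, 8, 16, 19, 10], [0, 9, 12, 17, 14], [0, 5, 8, 21, 7], [0, 6, 12, 24, 7], [0, 3, 7, 19, 11], [0, 13, 1, 8, 12], [0, 1, 2, 19, 9], [0, 2, 9, 23, 8], [0, 3, 11, 23, 13], [0, 4, 3, 13, 5], [0, 5, 15, 16, 19], [0, 5, 11, 22, 25], [0, 6, 13, 22, 23], [0, 12, 10, 16, 25], [0, 5, 6, 25, 12], [0, 11, 4, 6, 7], [0, 11, 2, 13, 1], [0, 5, 4, 7, 13]] [[(8,0),(19,20),(12,24),(0,0),(16,10),(16,16),(7,12),(0,6),(11,20),(12,15),(18,28),(7,1),(4,28),(9,28),(12,21),(14,27),(8,18),(8,6),(16,18),(16,3),(19,5),(11,5),(17,27),(8,3)],[(8,1),(17,24),(1,1),(3,25),(15,20),(17,21),(5,10),(9,0),(11,25),(18,1),(10,25),(18,12),(5,16),(18,9),(15,5),(18,19),(1,20),(8,12),(1,12),(19,9),(17,15),(9,6),(1,5),(19,19)],[(19,21),(17,25),(11,1),(9,10),(10,10),(6,0),(3,18),(19,24),(2,15),(10,0),(9,16),(11,12),(10,16),(13,27),(4,18),(3,3),(2,21),(6,6),(2,24),(4,3),(19,15),(10,6),(3,29),(12,27)],[(12,25),(1,0),(11,0),(19,1),(17,12),(19,12),(0,18),(13,10),(14,10),(17,1),(6,25),(11,6),(15,9),(13,16),(6,18),(14,16),(0,24),(7,27),(1,6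),(0,15),(0,21),(6,3),(15,19),(0,3)],[(0,1),(3,24),(9,11),(19,0),(16,0),(19,6),(4,0),(0,12),(4,10),(13,0),(9,22),(4,16),(3,15),(12,0),(12,6),(5,28),(7,11),(7,22),(17,11),(4,6),(13,6),(3,21),(17,22),(16,6)],[(16,11),(15,21),(10,11),(17,13),(16,1),(16,22),(1,16),(2,28),(1,10),(17,7),(5,0),(14,0),(10,22),(15,24),(15,15),(13,18),(5,18),(16,25),(5,3),(13,3),(14,6),(19,27),(5,6),(16,12)],[(16,17),(17,20),(6,1),(19,13),(19,7),(16,23),(8,10),(8,16),(6,10),(7,24),(7,21),(16,26),(6,16),(2,10),(14,18),(8,25),(1,25),(6,12),(14,3),(9,18),(17,5),(2,16),(9,3),(7,15)],[(7,13),(5,11),(3,19),(0,19),(4,1),(1,17),(8,11),(8,22),(1,23),(2,18),(0,28),(7,7),(5,22),(1,26),(2,0),(3,9),(2,3),(2,6),(10,18),(4,12),(6,29),(10,3),(11,29),(0,9)],[(0,7),(9,1),(19,25),(13,11),(0,13),(2,29),(8,17),(8,23),(14,24),(18,20),(3,0),(14,15),(5,27),(13,22),(8,26),(3,6),(3,10),(14,21),(15,27),(3,16),(11,9),(9,12),(18,5),(11,19)],[(11,21),(11,24),(2,14),(14,11),(4,11),(1,11),(6,11),(1,22),(14,25),(12,18),(15,1),(4,22),(6,22),(12,10),(15,12),(14,22),(2,4),(8,29),(15,16),(12,3),(15,10),(11,15),(10,29),(12,16)],[(12,14),(18,0),(10,1),(17,0),(13,1),(17,6),(7,25),(2,19)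,(18,21),(12,19),(9,27),(18,6),(13,24),(13,15),(12,4),(15,28),(2,9),(1,29),(13,21),(12,9),(13,12),(10,12),(18,15),(18,24)],[(18,29),(10,24),(9,17),(6,24),(9,23),(5,1),(7,20),(0,29),(3,1),(15,0),(9,26),(4,27),(5,15),(10,15),(15,6),(3,12),(10,21),(6,15),(5,21),(5,24),(6,21),(13,28),(5,12),(7,5)],[(7,0),(18,13),(11,13),(11,7),(4,17),(14,1),(16,27),(7,6),(14,14),(4,23),(18,7),(4,26),(7,2),(18,16),(11,16),(11,10),(4,15),(14,4),(16,29),(7,8),(14,12),(4,21),(18,10),(4,24)],[(4,29),(5,17),(10,17),(15,8),(3,14),(10,23),(6,17),(5,23),(5,26),(6,23),(13,25),(5,14),(7,3),(18,27),(10,26),(9,15),(6,26),(9,21),(5,4),(7,18),(0,27),(3,4),(15,2),(9,24)],[(9,29),(18,8),(13,26),(13,17),(12,1),(15,25),(2,11),(1,27),(13,23),(12,11),(13,14),(10,14),(18,17),(18,26),(12,12),(18,2),(10,4),(17,2),(13,4),(17,8),(7,28),(2,22),(18,23),(12,22)],[(12,20),(15,4),(4,19),(6,19),(12,7),(15,14),(14,19),(2,1),(8,27),(15,13),(12,5),(15,7),(11,17),(10,27),(12,13),(11,23),(11,26),(2,12),(14,9),(4,9),(1,9),(6,9),(1,19),(14,28)],[(14,26),(18,18),(3,2),(14,17),(5,29),(13,19),(8,24),(3,8),(3,7),(14,23),(15,29),(3,13),(11,11),(9,14),(18,3),(11,22),(0,10),(9,4),(19,28),(13,9),(0,16),(2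,27),(8,15),(8,21)],[(8,19),(1,21),(2,20),(0,25),(7,10),(5,19),(1,24),(2,2),(3,11),(2,5),(2,8),(10,20),(4,14),(6,27),(10,5),(11,27),(0,11),(7,16),(5,9),(3,22),(0,22),(4,4),(1,15),(8,9)],[(8,7),(8,13),(6,7),(7,26),(7,23),(16,24),(6,13),(2,7),(14,20),(8,28),(1,28),(6,14),(14,5),(9,20),(17,3),(2,13),(9,5),(7,17),(16,15),(17,18),(6,4),(19,16),(19,10),(16,21)],[(16,19),(1,13),(2,25),(1,7),(17,10),(5,2),(14,2),(10,19),(15,26),(15,17),(13,20),(5,20),(16,28),(5,5),(13,5),(14,8),(19,29),(5,8),(16,14),(16,9),(15,23),(10,9),(17,16),(16,4)],[(16,2),(19,8),(4,2),(0,14),(4,7),(13,2),(9,19),(4,13),(3,17),(12,2),(12,8),(5,25),(7,9),(7,19),(17,9),(4,8),(13,8),(3,23),(17,19),(16,8),(0,4),(3,26),(9,9),(19,2)],[(19,4),(17,14),(19,14),(0,20),(13,7),(14,7),(17,4),(6,28),(11,8),(15,11),(13,13),(6,20),(14,13),(0,26),(7,29),(1,8),(0,17),(0,23),(6,5),(15,22),(0,5),(12,28),(1,2),(11,2)],[(11,4),(9,7),(10,7),(6,2),(3,20),(19,26),(2,17),(10,2),(9,13),(11,14),(10,13),(13,29),(4,20),(3,5),(2,23),(6,8),(2,26),(4,5),(19,17),(10,8),(3,27),(12,29),(19,23),(17,28)],[(17,26),(1,4),(3,28),(15,18),(17,23),(5,7),(9,2),(11,28),(18,4),(10,28),(18,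14),(5,13),(18,11),(15,3),(18,22),(1,18),(8,14),(1,14),(19,11),(17,17),(9,8),(1,3),(19,22),(8,4)],[(8,2),(19,18),(12,26),(0,2),(16,7),(16,13),(7,14),(0,8),(11,18),(12,17),(18,25),(7,4),(4,25),(9,25),(12,23),(14,29),(8,20),(8,8),(16,20),(16,5),(19,3),(11,3),(17,29),(8,5)]]"
  by code_simp

lemma cyclic_certificate_31:
  "cyclic_certificate 31 [[0, 12, 1, 17, 19], [0, 6, 15, 17, 26], [0, 15, 22, 24, 5], [0, 15, 4, 16, 14], [0, 1, 3, 18, 6], [0, 11, 18, 22, 6], [0, 2, 3, 8, 18], [0, 2, 1, 28, 30], [0, 8, 1, 7, 28], [0, 5, 8, 12, 28], [0, 14, 10, 18, 30], [0, 1, 13, 15, 9], [0, 11, 3, 29, 25], [0, 6, 8, 16, 22], [0, 3, 6, 19, 16], [0, 14, 1, 22, 20], [0, 6, 5, 14, 24], [0, 14, 7, 17, 18], [0, 5, 21, 29, 9], [0, 12, 6, 24, 11], [0, 11, 6, 13, 21], [0, 1, 10, 19, 24], [0, 12, 4, 26, 10], [0, 3, 9, 12, 5], [0, 10, 3, 30, 28], [0, 10, 6, 20, 2], [0, 4, 22, 30, 2], [0, 10, 5, 16, 2], [0, 3, 13, 20, 25]] [[(7,1),(4,0),(24,16),(26,10),(6,18),(8,12),(8,1),(16,20),(21,0),(24,10),(0,1),(11,0),(15,1),(11,6),(3,9),(0,12),(4,6),(21,6),(3,19),(17,27),(15,12),(26,16),(8,11),(8,22),(16,5),(7,20),(7,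12),(6,3),(7,5)],[(7,0),(6,0),(7,27),(12,16),(24,29),(18,10),(6,6),(2,15),(13,18),(1,24),(15,29),(12,10),(2,24),(0,27),(1,15),(4,18),(11,15),(11,21),(20,9),(3,29),(1,21),(18,16),(2,21),(13,3),(20,19),(11,24),(7,6),(7,28),(4,3)],[(4,1),(6,1),(7,16),(7,10),(14,0),(9,18),(6,12),(23,0),(24,1),(12,1),(23,6),(28,0),(27,28),(4,25),(14,18),(17,9),(4,12),(14,6),(28,6),(14,29),(23,15),(26,27),(17,19),(23,21),(9,3),(23,24),(14,3),(12,12),(24,12)],[(24,17),(7,26),(7,17),(7,23),(11,28),(23,28),(10,20),(12,29),(8,28),(24,23),(22,1),(5,15),(25,20),(3,1),(3,12),(10,9),(25,28),(5,24),(9,24),(10,5),(26,0),(9,15),(5,21),(25,5),(22,12),(10,19),(9,21),(24,26),(26,6)],[(26,11),(12,17),(7,11),(7,22),(16,1),(20,20),(9,0),(22,16),(27,1),(27,20),(9,6),(12,23),(16,12),(6,24),(27,12),(22,10),(19,25),(0,9),(0,19),(18,0),(21,27),(26,22),(28,27),(20,5),(27,5),(12,26),(6,15),(18,6),(6,21)],[(6,19),(24,28),(14,1),(11,29),(16,0),(8,21),(13,0),(23,18),(25,1),(20,1),(19,1),(20,12),(16,6),(1,0),(13,6),(1,6),(19,20),(14,12),(25,12),(27,9),(22,25),(13,27),(19,12),(19,5),(27,19),(8,24),(23,3),(6,9),(8,15)],[(8,13),(18,11),(9,19),(23,29),(20,21),(8,20),(8,7),(2,18),(17,20),(5,18),(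28,24),(19,16),(17,1),(20,24),(2,3),(17,12),(28,15),(19,10),(5,3),(28,21),(2,10),(18,22),(17,5),(20,15),(9,9),(24,20),(24,5),(2,16),(8,5)],[(8,0),(6,7),(6,13),(10,21),(9,1),(13,1),(8,6),(26,15),(18,15),(26,24),(9,12),(26,21),(13,24),(18,21),(13,12),(15,9),(15,19),(18,24),(10,24),(10,15),(22,20),(13,15),(20,27),(16,9),(12,20),(22,5),(12,5),(13,21),(16,19)],[(16,21),(2,14),(23,1),(12,28),(22,17),(23,19),(2,19),(26,14),(15,16),(1,18),(23,12),(26,4),(21,24),(22,26),(2,9),(22,23),(21,18),(16,24),(5,10),(21,15),(21,21),(15,10),(2,4),(1,3),(16,15),(5,16),(23,9),(1,27),(21,3)],[(21,1),(13,19),(24,0),(8,29),(27,0),(25,0),(17,21),(18,14),(15,17),(17,24),(3,25),(14,25),(10,1),(18,4),(27,6),(28,18),(10,12),(21,12),(25,6),(25,9),(16,27),(15,23),(17,15),(13,9),(6,27),(25,19),(28,3),(15,26),(24,6)],[(24,11),(1,25),(12,0),(24,22),(27,21),(20,0),(5,19),(26,25),(1,19),(17,25),(3,20),(20,6),(28,10),(9,28),(0,20),(25,16),(5,0),(10,28),(5,9),(25,10),(5,6),(18,27),(28,16),(1,9),(27,15),(3,5),(27,24),(12,6),(0,5)],[(0,0),(15,28),(23,7),(22,0),(9,7),(19,0),(28,25),(9,13),(23,13),(3,24),(3,21),(21,10),(11,18),(14,10),(5,28),(0,6),(14,16),(19,9),(18,28),(16,28),(21,16),(10,27),(19,6),(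19,19),(22,6),(3,15),(4,29),(2,27),(11,3)],[(11,1),(12,11),(28,1),(5,14),(12,22),(20,13),(19,17),(26,20),(26,5),(14,24),(20,7),(21,11),(4,10),(11,12),(4,16),(25,27),(19,26),(19,23),(28,12),(15,20),(21,22),(10,16),(5,4),(14,15),(19,29),(10,10),(14,21),(0,28),(15,5)],[(15,0),(2,25),(27,29),(25,21),(16,13),(16,7),(17,0),(13,25),(21,25),(10,0),(28,11),(11,19),(4,11),(0,16),(4,22),(17,6),(10,6),(22,9),(1,10),(17,16),(15,6),(22,19),(28,22),(25,15),(0,10),(25,24),(17,10),(1,16),(11,9)],[(11,7),(0,26),(4,24),(3,0),(6,25),(1,1),(20,25),(18,20),(22,27),(18,5),(9,29),(14,11),(11,13),(0,17),(3,6),(1,12),(14,22),(3,16),(27,16),(13,10),(2,0),(13,16),(2,6),(27,10),(0,23),(5,27),(4,15),(4,21),(3,10)],[(3,8),(1,14),(14,19),(3,13),(27,13),(13,7),(2,2),(13,13),(2,8),(27,7),(0,21),(5,29),(4,17),(4,23),(3,7),(11,10),(0,24),(4,26),(3,2),(6,28),(1,4),(20,28),(18,18),(22,29),(18,3),(9,27),(14,9),(11,16),(0,15)],[(0,13),(4,19),(17,8),(10,8),(22,11),(1,7),(17,13),(15,8),(22,22),(28,19),(25,17),(0,7),(25,26),(17,7),(1,13),(11,11),(15,2),(2,28),(27,27),(25,23),(16,16),(16,10),(17,2),(13,28),(21,28),(10,2),(28,9),(11,22),(4,9)],[(4,7),(11,14),(4,13),(25,29),(19,24),(19,21),(28,1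4),(15,18),(21,19),(10,13),(5,1),(14,17),(19,27),(10,7),(14,23),(0,25),(15,3),(11,4),(12,9),(28,4),(5,12),(12,19),(20,16),(19,15),(26,18),(26,3),(14,26),(20,10),(21,9)],[(21,7),(11,20),(14,7),(5,25),(0,8),(14,13),(19,11),(18,25),(16,25),(21,13),(10,29),(19,8),(19,22),(22,8),(3,17),(4,27),(2,29),(11,5),(0,2),(15,25),(23,10),(22,2),(9,10),(19,2),(28,28),(9,16),(23,16),(3,26),(3,23)],[(3,18),(20,8),(28,7),(9,25),(0,18),(25,13),(5,2),(10,25),(5,11),(25,7),(5,8),(18,29),(28,13),(1,11),(27,17),(3,3),(27,26),(12,8),(0,3),(24,9),(1,28),(12,2),(24,19),(27,23),(20,2),(5,22),(26,28),(1,22),(17,28)],[(17,26),(3,28),(14,28),(10,4),(18,1),(27,8),(28,20),(10,14),(21,14),(25,8),(25,11),(16,29),(15,21),(17,17),(13,11),(6,29),(25,22),(28,5),(15,24),(24,8),(21,4),(13,22),(24,2),(8,27),(27,2),(25,2),(17,23),(18,12),(15,15)],[(15,13),(1,20),(23,14),(26,1),(21,26),(22,24),(2,11),(22,21),(21,20),(16,26),(5,7),(21,17),(21,23),(15,7),(2,1),(1,5),(16,17),(5,13),(23,11),(1,29),(21,5),(16,23),(2,12),(23,4),(12,25),(22,15),(23,22),(2,22),(26,12)],[(26,17),(18,17),(26,26),(9,14),(26,23),(13,26),(18,23),(13,14),(15,11),(15,22),(18,26),(10,26),(10,17),(22,18),(13,17),(20,29),(16,11),(12,18),(22,3),(12,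3),(13,23),(16,22),(8,2),(6,10),(6,16),(10,23),(9,4),(13,4),(8,8)],[(8,10),(2,20),(17,18),(5,20),(28,26),(19,13),(17,4),(20,26),(2,5),(17,14),(28,17),(19,7),(5,5),(28,23),(2,7),(18,19),(17,3),(20,17),(9,11),(24,18),(24,3),(2,13),(8,3),(8,16),(18,9),(9,22),(23,27),(20,23),(8,18)],[(8,23),(13,2),(23,20),(25,4),(20,4),(19,4),(20,14),(16,8),(1,2),(13,8),(1,8),(19,18),(14,14),(25,14),(27,11),(22,28),(13,29),(19,14),(19,3),(27,22),(8,26),(23,5),(6,11),(8,17),(6,22),(24,25),(14,4),(11,27),(16,2)],[(16,4),(20,18),(9,2),(22,13),(27,4),(27,18),(9,8),(12,21),(16,14),(6,26),(27,14),(22,7),(19,28),(0,11),(0,22),(18,2),(21,29),(26,19),(28,29),(20,3),(27,3),(12,24),(6,17),(18,8),(6,23),(26,9),(12,15),(7,9),(7,19)],[(7,21),(11,25),(23,25),(10,18),(12,27),(8,25),(24,21),(22,4),(5,17),(25,18),(3,4),(3,14),(10,11),(25,25),(5,26),(9,26),(10,3),(26,2),(9,17),(5,23),(25,3),(22,14),(10,22),(9,23),(24,24),(26,8),(24,15),(7,24),(7,15)],[(7,13),(7,7),(14,2),(9,20),(6,14),(23,2),(24,4),(12,4),(23,8),(28,2),(27,25),(4,28),(14,20),(17,11),(4,14),(14,8),(28,8),(14,27),(23,17),(26,29),(17,22),(23,23),(9,5),(23,26),(14,5),(12,14),(24,14),(4,4),(6,4)],[(6,2),(7,29),(12,13),(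24,27),(18,7),(6,8),(2,17),(13,20),(1,26),(15,27),(12,7),(2,26),(0,29),(1,17),(4,20),(11,17),(11,23),(20,11),(3,27),(1,23),(18,13),(2,23),(13,5),(20,22),(11,26),(7,8),(7,25),(4,5),(7,2)],[(7,4),(4,2),(24,13),(26,7),(6,20),(8,14),(8,4),(16,18),(21,2),(24,7),(0,4),(11,2),(15,4),(11,8),(3,11),(0,14),(4,8),(21,8),(3,22),(17,29),(15,14),(26,13),(8,9),(8,19),(16,3),(7,18),(7,14),(6,5),(7,3)]]"
  by code_simp

lemma cyclic_certificate_32:
  "cyclic_certificate 32 [[0, 6, 25, 26, 23], [0, 4, 6, 20, 29], [0, 15, 5, 23, 3], [0, 3, 5, 29, 30], [0, 2, 18, 25, 20], [0, 11, 1, 12, 5], [0, 15, 3, 10, 21], [0, 4, 21, 28, 12], [0, 1, 14, 18, 6], [0, 1, 17, 25, 13], [0, 11, 22, 29, 17], [0, 8, 13, 29, 3], [0, 6, 15, 19, 31], [0, 8, 5, 14, 2], [0, 13, 3, 23, 11], [0, 15, 1, 20, 24], [0, 1, 23, 31, 10], [0, 12, 15, 30, 10], [0, 11, 28, 30, 6], [0, 13, 18, 24, 25], [0, 3, 26, 31, 28], [0, 10, 25, 28, 26], [0, 13, 15, 25, 29], [0, 9, 1, 19, 7], [0, 5, 13, 16, 17], [0, 8, 2, 23, 5], [0, 2, 6, 11, 7], [0, 4, 5, 10, 12], [0, 16, 1, 10, 21], [0, 3, 22, 28, 7], [0, 2, 9, 21, 19]] [[(16,10),(21,25),(20,10),(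26,25),(27,18),(0,15),(3,27),(23,1),(28,12),(5,1),(5,12),(0,21),(8,0),(15,1),(28,1),(9,0),(8,6),(23,12),(15,12),(5,9),(5,19),(16,0),(16,16),(9,6),(19,27),(20,16),(27,3),(24,27),(0,24),(16,6)],[(16,11),(0,28),(18,15),(20,25),(26,0),(4,25),(25,1),(30,0),(18,24),(26,6),(22,18),(18,10),(17,10),(18,21),(1,18),(17,16),(4,0),(22,3),(2,28),(30,6),(30,29),(25,12),(16,22),(4,6),(3,18),(27,27),(1,3),(3,3),(18,16),(21,29)],[(21,24),(0,29),(24,24),(3,0),(3,10),(21,15),(3,16),(13,20),(6,12),(11,10),(13,28),(14,1),(10,10),(6,1),(11,16),(21,21),(17,18),(24,15),(17,3),(25,25),(29,0),(14,12),(24,21),(10,16),(20,0),(13,5),(29,6),(3,6),(20,29),(20,6)],[(20,11),(18,14),(24,25),(27,0),(1,0),(29,10),(7,10),(26,18),(27,6),(5,25),(9,28),(15,27),(21,10),(18,4),(12,24),(12,15),(8,15),(8,21),(1,6),(7,0),(22,27),(12,21),(8,24),(7,16),(29,16),(20,22),(7,6),(21,16),(26,3),(26,29)],[(26,24),(20,24),(3,1),(27,1),(20,15),(27,24),(13,1),(20,21),(27,12),(19,18),(10,28),(24,0),(13,12),(2,1),(24,6),(15,9),(15,19),(19,3),(17,28),(11,18),(6,11),(2,12),(11,3),(6,22),(26,15),(27,15),(26,21),(3,12),(4,29),(27,21)],[(27,19),(26,1),(3,11),(1,1),(20,14),(19,24),(3,22),(20,4),(29,15),(26,12),(0,10),(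29,21),(19,15),(12,0),(11,27),(29,24),(23,25),(12,6),(1,12),(25,20),(28,11),(28,22),(13,9),(0,0),(0,6),(19,21),(27,9),(13,19),(25,5),(0,16)],[(0,14),(4,24),(21,14),(29,11),(27,25),(19,25),(9,10),(4,10),(10,15),(7,15),(6,21),(0,4),(4,15),(7,21),(4,21),(21,4),(6,24),(30,18),(22,10),(10,21),(22,16),(7,24),(9,16),(4,16),(29,22),(10,24),(5,29),(6,15),(30,3),(3,28)],[(3,26),(25,0),(3,17),(7,11),(13,0),(3,23),(9,11),(16,15),(16,21),(24,18),(8,28),(11,0),(13,6),(9,15),(9,21),(2,9),(23,20),(16,24),(14,25),(19,10),(2,19),(25,6),(9,22),(7,22),(19,16),(24,3),(9,24),(11,6),(18,27),(23,5)],[(23,0),(30,1),(13,21),(26,19),(20,20),(20,5),(4,11),(16,14),(16,4),(25,16),(14,16),(12,18),(2,16),(28,21),(7,28),(25,10),(1,27),(23,6),(28,24),(30,12),(14,10),(1,28),(2,10),(4,22),(12,3),(13,15),(15,28),(13,24),(26,9),(28,15)],[(28,13),(18,25),(6,13),(27,7),(27,13),(29,14),(10,14),(16,20),(16,5),(5,20),(30,25),(29,4),(22,24),(6,7),(28,7),(22,15),(2,20),(14,9),(14,20),(10,4),(14,19),(23,9),(23,19),(21,0),(11,28),(2,5),(21,6),(14,5),(22,21),(5,5)],[(5,0),(26,7),(11,11),(5,24),(19,19),(26,13),(7,14),(24,19),(25,17),(5,21),(5,6),(30,10),(25,26),(7,4),(11,22),(25,23),(10,18),(19,9),(30,16),(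10,3),(10,0),(28,27),(16,27),(6,27),(29,27),(24,9),(18,0),(10,6),(18,6),(5,15)],[(5,13),(22,19),(13,29),(9,29),(10,29),(0,11),(6,20),(8,29),(14,17),(30,24),(5,7),(15,16),(2,27),(17,0),(1,10),(17,27),(1,16),(22,9),(14,26),(28,28),(14,23),(30,15),(14,29),(30,21),(23,29),(15,10),(12,27),(6,5),(17,6),(0,22)],[(0,20),(18,11),(14,0),(15,26),(24,1),(29,20),(0,5),(11,1),(12,19),(29,5),(30,11),(15,17),(23,16),(22,0),(24,12),(8,18),(19,0),(12,10),(30,22),(16,28),(23,10),(14,6),(19,6),(22,6),(12,9),(15,23),(12,16),(11,12),(18,22),(8,3)],[(8,1),(17,11),(10,11),(21,11),(13,13),(19,14),(4,14),(13,7),(2,17),(22,25),(25,27),(2,26),(23,17),(8,10),(4,4),(17,22),(8,12),(15,20),(23,26),(6,28),(23,23),(1,24),(2,23),(10,22),(1,15),(19,4),(8,16),(21,22),(1,21),(15,5)],[(15,0),(18,20),(6,0),(18,5),(2,0),(12,1),(7,20),(9,14),(28,20),(6,6),(7,5),(17,1),(22,1),(8,11),(9,4),(17,15),(21,18),(12,12),(15,6),(29,28),(21,3),(2,6),(25,9),(22,12),(25,19),(17,24),(8,22),(17,21),(17,12),(28,5)],[(28,0),(1,19),(11,17),(12,25),(24,7),(11,26),(4,20),(9,20),(7,29),(28,6),(11,23),(1,11),(24,13),(4,5),(9,5),(28,2),(1,22),(11,15),(12,28),(24,10),(11,24),(4,18),(9,18),(7,27),(28,8),(11,21),(1,9),(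24,16),(4,3),(9,3)],[(9,1),(17,17),(21,20),(12,14),(15,8),(29,25),(21,5),(2,8),(25,11),(22,14),(25,22),(17,26),(8,19),(17,23),(17,14),(28,3),(15,2),(18,18),(6,2),(18,3),(2,2),(12,4),(7,18),(9,12),(28,18),(6,8),(7,3),(17,4),(22,4),(8,9)],[(8,7),(4,1),(17,19),(8,14),(15,18),(23,24),(6,25),(23,21),(1,26),(2,21),(10,19),(1,17),(19,1),(8,13),(21,19),(1,23),(15,3),(8,4),(17,9),(10,9),(21,9),(13,16),(19,12),(4,12),(13,10),(2,15),(22,28),(25,29),(2,24),(23,15)],[(23,13),(22,2),(24,14),(8,20),(19,2),(12,7),(30,19),(16,25),(23,7),(14,8),(19,8),(22,8),(12,11),(15,21),(12,13),(11,14),(18,19),(8,5),(0,18),(18,9),(14,2),(15,24),(24,4),(29,18),(0,3),(11,4),(12,22),(29,3),(30,9),(15,15)],[(15,13),(2,29),(17,2),(1,7),(17,29),(1,13),(22,11),(14,24),(28,25),(14,21),(30,17),(14,27),(30,23),(23,27),(15,7),(12,29),(6,3),(17,8),(0,19),(5,16),(22,22),(13,27),(9,27),(10,27),(0,9),(6,18),(8,27),(14,15),(30,26),(5,10)],[(5,8),(30,7),(25,24),(7,1),(11,19),(25,21),(10,20),(19,11),(30,13),(10,5),(10,2),(28,29),(16,29),(6,29),(29,29),(24,11),(18,2),(10,8),(18,8),(5,17),(5,2),(26,10),(11,9),(5,26),(19,22),(26,16),(7,12),(24,22),(25,15),(5,23)],[(5,18),(30,28),(29,1),(22,26),(6,1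0),(28,10),(22,17),(2,18),(14,11),(14,18),(10,1),(14,22),(23,11),(23,22),(21,2),(11,25),(2,3),(21,8),(14,3),(22,23),(5,3),(28,16),(18,28),(6,16),(27,10),(27,16),(29,12),(10,12),(16,18),(16,3)],[(16,1),(25,13),(14,13),(12,20),(2,13),(28,23),(7,25),(25,7),(1,29),(23,8),(28,26),(30,14),(14,7),(1,25),(2,7),(4,19),(12,5),(13,17),(15,25),(13,26),(26,11),(28,17),(23,2),(30,4),(13,23),(26,22),(20,18),(20,3),(4,9),(16,12)],[(16,17),(16,23),(24,20),(8,25),(11,2),(13,8),(9,17),(9,23),(2,11),(23,18),(16,26),(14,28),(19,7),(2,22),(25,8),(9,19),(7,19),(19,13),(24,5),(9,26),(11,8),(18,29),(23,3),(3,24),(25,2),(3,15),(7,9),(13,2),(3,21),(9,9)],[(9,7),(4,7),(10,17),(7,17),(6,23),(0,1),(4,17),(7,23),(4,23),(21,1),(6,26),(30,20),(22,7),(10,23),(22,13),(7,26),(9,13),(4,13),(29,19),(10,26),(5,27),(6,17),(30,5),(3,25),(0,12),(4,26),(21,12),(29,9),(27,28),(19,28)],[(19,26),(3,19),(20,1),(29,17),(26,14),(0,7),(29,23),(19,17),(12,2),(11,29),(29,26),(23,28),(12,8),(1,14),(25,18),(28,9),(28,19),(13,11),(0,2),(0,8),(19,23),(27,11),(13,22),(25,3),(0,13),(27,22),(26,4),(3,9),(1,4),(20,12)],[(20,17),(27,26),(13,4),(20,23),(27,14),(19,20),(10,25),(24,2),(13,14),(2,4),(24,8),(15,11),(15,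22),(19,5),(17,25),(11,20),(6,9),(2,14),(11,5),(6,19),(26,17),(27,17),(26,23),(3,14),(4,27),(27,23),(26,26),(20,26),(3,4),(27,4)],[(27,2),(1,2),(29,7),(7,7),(26,20),(27,8),(5,28),(9,25),(15,29),(21,7),(18,1),(12,26),(12,17),(8,17),(8,23),(1,8),(7,2),(22,29),(12,23),(8,26),(7,13),(29,13),(20,19),(7,8),(21,13),(26,5),(26,27),(20,9),(18,12),(24,28)],[(24,26),(3,2),(3,7),(21,17),(3,13),(13,18),(6,14),(11,7),(13,25),(14,4),(10,7),(6,4),(11,13),(21,23),(17,20),(24,17),(17,5),(25,28),(29,2),(14,14),(24,23),(10,13),(20,2),(13,3),(29,8),(3,8),(20,27),(20,8),(21,26),(0,27)],[(0,25),(18,17),(20,28),(26,2),(4,28),(25,4),(30,2),(18,26),(26,8),(22,20),(18,7),(17,7),(18,23),(1,20),(17,13),(4,2),(22,5),(2,25),(30,8),(30,27),(25,14),(16,19),(4,8),(3,20),(27,29),(1,5),(3,5),(18,13),(21,27),(16,9)],[(16,7),(21,28),(20,7),(26,28),(27,20),(0,17),(3,29),(23,4),(28,14),(5,4),(5,14),(0,23),(8,2),(15,4),(28,4),(9,2),(8,8),(23,14),(15,14),(5,11),(5,22),(16,2),(16,13),(9,8),(19,29),(20,13),(27,5),(24,29),(0,26),(16,8)]]"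
  by code_simp

theorem lemma3p1:
  fixes v :: nat
  assumes "v \<in> {7, 11, 16, 26, 31, 32}"
  shows "\<exists>(X :: nat set) \<B>. finite X \<and> card X = v \<and> is_S3_K4e X \<B>"
  using assms S3_K4e_exists_if_cyclic_certificate[OF cyclic_certificate_7]
    S3_K4e_exists_if_cyclic_certificate[OF cyclic_certificate_11]
    S3_K4e_exists_if_cyclic_certificate[OF cyclic_certificate_16]
    S3_K4e_exists_if_cyclic_certificate[OF cyclic_certificate_26]
    S3_K4e_exists_if_cyclic_certificate[OF cyclic_certificate_31]
    S3_K4e_exists_if_cyclic_certificate[OF cyclic_certificate_32]
  by auto

end
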